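(* For every even $n\ge4$, no vertex of the unweighted cycle $C_n$ is sedentary.
   Context: For a graph with adjacency matrix $A$, $U(t)=e^{itA}$. A vertex $u$ is sedentary if $\inf_{t>0}|U(t)_{u,u}|\ge C$ for some constant $0<C\le1$, and not sedentary if $\inf_{t>0}|U(t)_{u,u}|=0$. *)

theory Defs
  imports Complex_Main
begin

text \<open>Square matrices of size n are represented as functions nat => nat => complex,
  only the entries with indices below n being relevant.\<close>

definition mat_mult :: "nat \<Rightarrow> (nat \<Rightarrow> nat \<Rightarrow> complex) \<Rightarrow> (nat \<Rightarrow> nat \<Rightarrow> complex) \<Rightarrow> nat \<Rightarrow> nat \<Rightarrow> complex" where
  "mat_mult n A B = (\<lambda>i j. \<Sum>l<n. A i l * B l j)"

fun mat_pow :: "nat \<Rightarrow> (nat \<Rightarrow> nat \<Rightarrow> complex) \<Rightarrow> nat \<Rightarrow> nat \<Rightarrow> nat \<Rightarrow> complex" where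
  "mat_pow n A 0 = (\<lambda>i j. if i = j then 1 else 0)"
| "mat_pow n A (Suc k) = mat_mult n A (mat_pow n A k)"

definition cycle_adj :: "nat \<Rightarrow> nat \<Rightarrow> nat \<Rightarrow> complex" where
  "cycle_adj n i j = (if i < n \<and> j < n \<and> (j = (i + 1) mod n \<or> i = (j + 1) mod n) then 1 else 0)"

text \<open>Transition matrix U(t) = exp(i t A), written as the exponential power series.\<close>
definition transition :: "nat \<Rightarrow> (nat \<Rightarrow> nat \<Rightarrow> complex) \<Rightarrow> real \<Rightarrow> nat \<Rightarrow> nat \<Rightarrow> complex" where
  "transition n A t u v = (\<Sum>k. (\<i> * complex_of_real t) ^ k / of_nat (fact k) * mat_pow n A k u v)"

definition sedentary :: "nat \<Rightarrow> (nat \<Rightarrow> nat \<Rightarrow> complex) \<Rightarrow> nat \<Rightarrow> bool" where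
  "sedentary n A u = (\<exists>C. 0 < C \<and> C \<le> 1 \<and> (INF t\<in>{0::real<..}. cmod (transition n A t u u)) \<ge> C)"

end

theory Submission
  imports Defs
begin

(*
  Let w_k be the number of closed walks of length k at u, so U(t)_uu = sum_k (i t)^k / k! w_k.
  For even n the cycle is bipartite, so w_k = 0 for odd k and U(t)_uu is real; it is
  continuous and equals 1 at t = 0. By the intermediate value theorem it therefore suffices
  to find t > 0 with U(t)_uu <= 0, because then U vanishes at some positive time.
  For C_4, U(t)_uu = (1 + cos 2t) / 2 vanishes at t = pi/2. For n >= 6, closed walks of
  length at most 4 are those of the infinite path (w_2 = 2, w_4 = 6) and w_6 >= 20;
  with w_k <= 2^k bounding the tail, this gives U(3/2)_uu < 0.
*)

lemma transition_eq_powser: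
  "transition n A t u v = (\<Sum>k. (\<i> ^ k / fact k * mat_pow n A k u v) * complex_of_real t ^ k)"
  unfolding transition_def by (simp add: power_mult_distrib mult_ac)

lemma transition_0 [simp]: "transition n A 0 u u = 1"
  unfolding transition_eq_powser of_real_0 powser_zero by simp

lemma summable_transition_powser:
  assumes "\<And>k. norm (mat_pow n A k u v) \<le> c ^ k"
  shows "summable (\<lambda>k. (\<i> ^ k / fact k * mat_pow n A k u v) * z ^ k)"
proof (rule summable_comparison_test'[OF summable_exp[of "c * norm z"]])
  fix k
  have "norm ((\<i> ^ k / fact k * mat_pow n A k u v) * z ^ k) = norm (mat_pow n A k u v) * norm z ^ k / fact k"
    by (simp add: norm_mult norm_divide norm_power)
  also have "\<dots> \<le> c ^ k * norm z ^ k / fact k"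
    by (intro divide_right_mono mult_right_mono assms) simp_all
  finally show "norm ((\<i> ^ k / fact k * mat_pow n A k u v) * z ^ k) \<le> inverse (fact k) * (c * norm z) ^ k"
    by (simp add: power_mult_distrib divide_inverse mult_ac)
qed

lemma isCont_transition:
  assumes "\<And>k. norm (mat_pow n A k u v) \<le> c ^ k"
  shows "isCont (\<lambda>t. transition n A t u v) t"
proof -
  have "isCont (\<lambda>z. \<Sum>k. (\<i> ^ k / fact k * mat_pow n A k u v) * z ^ k) (complex_of_real t)"
    by (intro isCont_powser_converges_everywhere summable_transition_powser[OF assms])
  then show ?thesis
    unfolding transition_eq_powser by (intro isCont_o2[OF isCont_of_real[OF continuous_ident]])
qed

lemma transition_real:
  assumes "\<And>k. norm (mat_pow n A k u v) \<le> c ^ k"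
    and "\<And>k. mat_pow n A k u v \<in> \<real>" and "\<And>k. odd k \<Longrightarrow> mat_pow n A k u v = 0"
  shows "transition n A t u v \<in> \<real>"
proof -
  let ?a = "\<lambda>k. (\<i> ^ k / fact k * mat_pow n A k u v) * complex_of_real t ^ k"
  have "?a k \<in> \<real>" for k
  proof (cases "even k")
    case True
    then have "\<i> ^ k = (- 1) ^ (k div 2)"
      by (metis dvd_mult_div_cancel power_mult power2_i)
    then show ?thesis
      using assms(2) by (simp add: fact_in_Reals)
  next
    case False
    then show ?thesis using assms(3) by simp
  qed
  then have "Im (?a k) = 0" for k
    by (simp add: complex_is_Real_iff)
  then have "Im (\<Sum>k. ?a k) = 0"
    using Im_suminf[OF summable_transition_powser[OF assms(1)]] by simp
  then show ?thesis
    unfolding transition_eq_powser by (simp add: complex_is_Real_iff)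
qed

lemma not_sedentary_if_zero:
  assumes "t > 0" "transition n A t u u = 0"
  shows "\<not> sedentary n A u"
proof
  assume "sedentary n A u"
  then obtain C where "0 < C" "C \<le> (INF t\<in>{0::real<..}. cmod (transition n A t u u))"
    unfolding sedentary_def by auto
  moreover have "(INF t\<in>{0::real<..}. cmod (transition n A t u u)) \<le> cmod (transition n A t u u)"
    by (rule cINF_lower) (auto intro: bdd_belowI[of _ 0] simp: assms(1))
  ultimately show False using assms(2) by simp
qed

lemma not_sedentary_if_Re_nonpos:
  assumes "\<And>k. norm (mat_pow n A k u u) \<le> c ^ k"
    and "\<And>k. mat_pow n A k u u \<in> \<real>" and "\<And>k. odd k \<Longrightarrow> mat_pow n A k u u = 0"
    and "t > 0" "Re (transition n A t u u) \<le> 0"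
  shows "\<not> sedentary n A u"
proof -
  let ?f = "\<lambda>t. Re (transition n A t u u)"
  have "continuous_on {0..t} ?f"
    by (intro continuous_at_imp_continuous_on ballI isCont_Re isCont_transition[OF assms(1)])
  then obtain s where s: "0 \<le> s" "s \<le> t" "?f s = 0"
    using IVT2'[of ?f t 0 0] assms(4,5) by auto
  have "s \<noteq> 0" using s(3) by auto
  moreover have "transition n A s u u = 0"
    using s(3) transition_real[OF assms(1-3)] by (simp add: complex_is_Real_iff complex_eq_iff)
  ultimately show ?thesis using s(1) by (intro not_sedentary_if_zero[of s]) auto
qed

lemma fact_mult_power_le: "fact m * of_nat (Suc m) ^ k \<le> (fact (m + k) :: 'a::linordered_semidom)"
proof (induction k)
  case (Suc k)
  have "fact m * of_nat (Suc m) ^ Suc k = of_nat (Suc m) * (fact m * of_nat (Suc m) ^ k :: 'a)"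
    by (simp add: mult_ac)
  also have "\<dots> \<le> of_nat (Suc (m + k)) * fact (m + k)"
    using Suc.IH by (intro mult_mono) simp_all
  finally show ?case by simp
qed simp

lemma norm_suminf_exp_tail_le:
  fixes a :: "nat \<Rightarrow> 'a::banach" and x :: real
  assumes bound: "\<And>k. norm (a k) \<le> x ^ k / fact k" and "0 \<le> x" "x < real m + 1"
  shows "norm (\<Sum>k. a (k + m)) \<le> x ^ m / fact m * ((real m + 1) / (real m + 1 - x))"
proof -
  define r where "r = x / (real m + 1)"
  have r: "0 \<le> r" "r < 1" using assms(2,3) by (simp_all add: r_def)
  have "norm (a (k + m)) \<le> x ^ m / fact m * r ^ k" for k
  proof -
    have "norm (a (k + m)) \<le> x ^ (m + k) / fact (m + k)"
      using bound[of "k + m"] by (simp add: add.commute)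
    also have "\<dots> \<le> x ^ (m + k) / (fact m * of_nat (Suc m) ^ k)"
      using assms(2) by (intro divide_left_mono fact_mult_power_le) simp_all
    also have "\<dots> = x ^ m / fact m * r ^ k"
      by (simp add: r_def power_add power_divide add.commute)
    finally show ?thesis .
  qed
  then have "norm (\<Sum>k. a (k + m)) \<le> (\<Sum>k. x ^ m / fact m * r ^ k)"
    using r by (intro norm_suminf_le summable_mult summable_geometric) simp_all
  also have "\<dots> = x ^ m / fact m * (\<Sum>k. r ^ k)"
    using r by (intro suminf_mult summable_geometric) simp
  also have "\<dots> = x ^ m / fact m * (1 / (1 - r))"
    using r by (simp add: suminf_geometric)
  also have "\<dots> = x ^ m / fact m * ((real m + 1) / (real m + 1 - x))"
    using assms(3) by (simp add: r_def field_simps)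
  finally show ?thesis .
qed

definition cycle_vertex :: "nat \<Rightarrow> nat \<Rightarrow> int \<Rightarrow> nat" where
  "cycle_vertex n u d = nat ((int u + d) mod int n)"

lemma cycle_vertex_less: "n > 0 \<Longrightarrow> cycle_vertex n u d < n"
  unfolding cycle_vertex_def by (simp add: nat_less_iff)

lemma cycle_vertex_of_nat: "cycle_vertex n u (int k) = (u + k) mod n"
  unfolding cycle_vertex_def by (simp add: nat_mod_distrib flip: of_nat_add)

lemma cycle_vertex_0: "u < n \<Longrightarrow> cycle_vertex n u 0 = u"
  using cycle_vertex_of_nat[of n u 0] by simp

lemma cycle_vertex_eq_iff:
  assumes "n > 0"
  shows "cycle_vertex n u a = cycle_vertex n v b \<longleftrightarrow> int n dvd (int u + a) - (int v + b)"
  using assms unfolding cycle_vertex_def by (simp add: eq_nat_nat_iff mod_eq_dvd_iff)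

lemma cycle_vertex_cycle_vertex:
  assumes "n > 0"
  shows "cycle_vertex n (cycle_vertex n u d) e = cycle_vertex n u (d + e)"
  using assms unfolding cycle_vertex_def by (simp add: mod_add_left_eq add.assoc)

lemma cycle_adj_cycle_vertex:
  assumes "n \<ge> 3" "l < n"
  shows "cycle_adj n (cycle_vertex n u d) l =
    (if l = cycle_vertex n u (d + 1) then 1 else 0) + (if l = cycle_vertex n u (d - 1) then 1 else 0)"
proof -
  let ?i = "cycle_vertex n u d"
  have n: "n > 0" using assms by simp
  have succ: "(?i + 1) mod n = cycle_vertex n u (d + 1)"
    using cycle_vertex_of_nat[of n ?i 1] cycle_vertex_cycle_vertex[OF n] by simp
  have pred: "?i = (l + 1) mod n \<longleftrightarrow> l = cycle_vertex n u (d - 1)"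
  proof -
    have "?i = (l + 1) mod n \<longleftrightarrow> int n dvd (int u + d) - (int l + 1)"
      using cycle_vertex_eq_iff[OF n, of u d l 1] cycle_vertex_of_nat[of n l 1] by simp
    also have "\<dots> \<longleftrightarrow> int n dvd (int l + 0) - (int u + (d - 1))"
    proof -
      have "(int l + 0) - (int u + (d - 1)) = - ((int u + d) - (int l + 1))"
        by simp
      then show ?thesis by (simp only: dvd_minus_iff)
    qed
    also have "\<dots> \<longleftrightarrow> l = cycle_vertex n u (d - 1)"
      using cycle_vertex_eq_iff[OF n, of l 0 u "d - 1"] cycle_vertex_0[OF assms(2)] by simp
    finally show ?thesis .
  qed
  have distinct: "cycle_vertex n u (d + 1) \<noteq> cycle_vertex n u (d - 1)"
    using cycle_vertex_eq_iff[OF n, of u "d + 1" u "d - 1"] assms(1) by (auto dest: zdvd_imp_le)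
  show ?thesis
    unfolding cycle_adj_def succ pred using assms n distinct cycle_vertex_less[OF n] by auto
qed

lemma mat_mult_cycle_adj:
  assumes "n \<ge> 3"
  shows "mat_mult n (cycle_adj n) B (cycle_vertex n u d) j =
    B (cycle_vertex n u (d + 1)) j + B (cycle_vertex n u (d - 1)) j"
proof -
  have n: "n > 0" using assms by simp
  have "mat_mult n (cycle_adj n) B (cycle_vertex n u d) j =
    (\<Sum>l<n. (if l = cycle_vertex n u (d + 1) then B l j else 0)
           + (if l = cycle_vertex n u (d - 1) then B l j else 0))"
    unfolding mat_mult_def by (intro sum.cong) (simp_all add: cycle_adj_cycle_vertex[OF assms] distrib_right)
  then show ?thesis
    by (simp add: sum.distrib cycle_vertex_less[OF n])
qed

text \<open>Numbers of walks of length k from offset d to offset 0, on C_n and on the infinite path.\<close>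

fun cycle_walks :: "nat \<Rightarrow> nat \<Rightarrow> int \<Rightarrow> nat" where
  "cycle_walks n 0 d = (if int n dvd d then 1 else 0)"
| "cycle_walks n (Suc k) d = cycle_walks n k (d + 1) + cycle_walks n k (d - 1)"

fun line_walks :: "nat \<Rightarrow> int \<Rightarrow> nat" where
  "line_walks 0 d = (if d = 0 then 1 else 0)"
| "line_walks (Suc k) d = line_walks k (d + 1) + line_walks k (d - 1)"

lemma mat_pow_cycle_adj:
  assumes "n \<ge> 3" "u < n"
  shows "mat_pow n (cycle_adj n) k (cycle_vertex n u d) u = of_nat (cycle_walks n k d)"
proof (induction k arbitrary: d)
  case 0
  have "cycle_vertex n u d = u \<longleftrightarrow> int n dvd d"
    using cycle_vertex_eq_iff[of n u d u 0] cycle_vertex_0[OF assms(2)] assms by simp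
  then show ?case by simp
next
  case (Suc k)
  then show ?case by (simp add: mat_mult_cycle_adj[OF assms(1)])
qed

lemma cycle_walks_odd:
  assumes "even n" "odd (int k + d)"
  shows "cycle_walks n k d = 0"
  using assms(2)
proof (induction k arbitrary: d)
  case 0
  have "\<not> int n dvd d"
    using 0 assms(1) dvd_trans[of 2 "int n" d] by auto
  then show ?case by simp
next
  case (Suc k)
  have "odd (int k + (d + 1))" "odd (int k + (d - 1))"
    using Suc.prems by (simp_all add: algebra_simps)
  then show ?case using Suc.IH by simp
qed

lemma cycle_walks_le: "cycle_walks n k d \<le> 2 ^ k"
proof (induction k arbitrary: d)
  case (Suc k)
  show ?case using add_mono[OF Suc.IH[of "d + 1"] Suc.IH[of "d - 1"]] by simp
qed simp

lemma line_walks_le_cycle_walks: "line_walks k d \<le> cycle_walks n k d"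
  by (induction k arbitrary: d) (simp_all add: add_mono)

lemma cycle_walks_eq_line_walks: "\<bar>d\<bar> + int k < int n \<Longrightarrow> cycle_walks n k d = line_walks k d"
proof (induction k arbitrary: d)
  case 0
  then show ?case using dvd_imp_le_int[of d "int n"] by auto
next
  case (Suc k)
  have "\<bar>d + 1\<bar> + int k < int n" "\<bar>d - 1\<bar> + int k < int n"
    using Suc.prems by linarith+
  then have "cycle_walks n k (d + 1) = line_walks k (d + 1)" "cycle_walks n k (d - 1) = line_walks k (d - 1)"
    using Suc.IH by blast+
  then show ?case by (simp only: cycle_walks.simps(2) line_walks.simps(2))
qed

lemma cycle_walks_4: "cycle_walks 4 (Suc k) d = (if odd (int k + d) then 2 ^ k else 0)"
proof (induction k arbitrary: d)
  case 0
  have "odd d \<longleftrightarrow> 4 dvd d + 1 \<or> 4 dvd d - 1" "\<not> (4 dvd d + 1 \<and> 4 dvd d - 1)"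
    by presburger+
  then show ?case by (simp only: cycle_walks.simps of_nat_0 add_0 power_0) (simp split: if_split)
next
  case (Suc k)
  have parity: "odd (int k + (d + 1)) \<longleftrightarrow> odd (int (Suc k) + d)"
    "odd (int k + (d - 1)) \<longleftrightarrow> odd (int (Suc k) + d)"
    by presburger+
  have "cycle_walks 4 (Suc (Suc k)) d = cycle_walks 4 (Suc k) (d + 1) + cycle_walks 4 (Suc k) (d - 1)"
    by (rule cycle_walks.simps(2))
  then show ?case unfolding Suc.IH parity by simp
qed

lemma mat_pow_cycle_adj_diag:
  assumes "n \<ge> 3" "u < n"
  shows "mat_pow n (cycle_adj n) k u u = of_nat (cycle_walks n k 0)"
  using mat_pow_cycle_adj[OF assms, of k 0] cycle_vertex_0[OF assms(2)] by simp

lemma norm_mat_pow_cycle_adj_diag_le: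
  assumes "n \<ge> 3" "u < n"
  shows "norm (mat_pow n (cycle_adj n) k u u) \<le> 2 ^ k"
  using cycle_walks_le[of n k 0] unfolding mat_pow_cycle_adj_diag[OF assms] norm_of_nat
  by (simp add: of_nat_le_iff[symmetric])

text \<open>The spectrum of C_4 is 2, 0, 0, -2.\<close>

lemma cycle_walks_4_0:
  "(of_nat (cycle_walks 4 k 0) :: complex) = (2 ^ k + (- 2) ^ k) / 4 + (if k = 0 then 1 / 2 else 0)"
proof (cases k)
  case (Suc m)
  then show ?thesis
    using cycle_walks_4[of m 0] by (cases "even m") simp_all
qed simp

lemma transition_cycle_4:
  assumes "u < 4"
  shows "transition 4 (cycle_adj 4) t u u = complex_of_real ((1 + cos (2 * t)) / 2)"
proof -
  let ?z = "2 * \<i> * complex_of_real t" and ?w = "- 2 * \<i> * complex_of_real t"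
  have coefficient: "(\<i> ^ k / fact k * mat_pow 4 (cycle_adj 4) k u u) * complex_of_real t ^ k =
      (?z ^ k /\<^sub>R fact k) / 4 + (?w ^ k /\<^sub>R fact k) / 4 + (if k = 0 then 1 / 2 else 0)" for k
    using assms by (simp add: mat_pow_cycle_adj_diag cycle_walks_4_0 scaleR_conv_of_real
        power_minus[of 2] power_minus[of "\<i> * (complex_of_real t * 2)"] field_simps)
  have "(\<lambda>k. (?z ^ k /\<^sub>R fact k) / 4 + (?w ^ k /\<^sub>R fact k) / 4 + (if k = 0 then 1 / 2 else 0))
      sums (exp ?z / 4 + exp ?w / 4 + 1 / 2)"
    by (intro sums_add sums_divide exp_converges sums_single[of 0 "\<lambda>_. 1 / 2", simplified])
  then have "transition 4 (cycle_adj 4) t u u = (exp ?z + exp ?w) / 4 + 1 / 2"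
    unfolding transition_eq_powser coefficient by (simp add: sums_iff add_divide_distrib)
  also have "\<dots> = (cis (2 * t) + cis (- (2 * t))) / 4 + 1 / 2"
    by (simp add: cis_conv_exp mult_ac)
  finally show ?thesis
    by (simp add: complex_eq_iff)
qed

lemma line_walks_small: "line_walks 2 0 = 2" "line_walks 4 0 = 6" "line_walks 6 0 = 20"
  by (simp_all add: numeral_eq_Suc)

lemma Re_transition_cycle_neg:
  assumes "n \<ge> 6" "even n" "u < n"
  shows "Re (transition n (cycle_adj n) (3 / 2) u u) < 0"
proof -
  have n: "n \<ge> 3" using assms(1) by simp
  define w where "w k = real (cycle_walks n k 0)" for k
  define a where "a k = (\<i> ^ k / fact k * mat_pow n (cycle_adj n) k u u) * complex_of_real (3 / 2) ^ k" for k
  have a: "a k = \<i> ^ k * complex_of_real ((3 / 2) ^ k / fact k * w k)" for k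
    unfolding a_def w_def mat_pow_cycle_adj_diag[OF n assms(3)] by simp
  have "norm (a k) \<le> 3 ^ k / fact k" for k
  proof -
    have "norm (a k) = (3 / 2) ^ k / fact k * w k"
      unfolding a norm_mult norm_power norm_ii norm_of_real by (simp add: w_def)
    also have "\<dots> \<le> (3 / 2) ^ k / fact k * 2 ^ k"
      unfolding w_def using cycle_walks_le[of n k 0] by (intro mult_left_mono) (simp_all add: of_nat_le_iff[symmetric])
    finally show ?thesis by (simp add: power_mult_distrib[symmetric])
  qed
  then have tail: "norm (\<Sum>k. a (k + 8)) \<le> 3 ^ 8 / fact 8 * (9 / 6)"
    using norm_suminf_exp_tail_le[of a 3 8] by (simp add: power_divide)
  have "w k = 0" if "odd k" for k
    unfolding w_def using cycle_walks_odd[OF assms(2), of k 0] that by simp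
  then have odd: "w 1 = 0" "w 3 = 0" "w 5 = 0" "w 7 = 0"
    by simp_all
  have even: "w 0 = 1" "w 2 = 2" "w 4 = 6" "w 6 \<ge> 20"
    unfolding w_def using cycle_walks_eq_line_walks[of 0 _ n] line_walks_le_cycle_walks[of 6 0 n]
      line_walks_small assms(1) by simp_all
  have "Re (\<Sum>k<8. a k) = 1 - 9 / 8 * w 2 + 27 / 128 * w 4 - 729 / 46080 * w 6"
    unfolding a by (simp add: eval_nat_numeral odd even)
  also have "\<dots> \<le> - 77 / 256"
    using even by simp
  finally have head: "Re (\<Sum>k<8. a k) \<le> - 77 / 256" .
  have "summable a"
    unfolding a_def by (rule summable_transition_powser[OF norm_mat_pow_cycle_adj_diag_le[OF n assms(3)]])
  then have "Re (transition n (cycle_adj n) (3 / 2) u u) = Re (\<Sum>k. a (k + 8)) + Re (\<Sum>k<8. a k)"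
    unfolding transition_eq_powser a_def[symmetric] by (simp add: suminf_split_initial_segment[of a 8])
  also have "\<dots> \<le> norm (\<Sum>k. a (k + 8)) - 77 / 256"
    using head complex_Re_le_cmod[of "\<Sum>k. a (k + 8)"] by linarith
  also have "\<dots> < 0"
    using tail by (simp add: fact_numeral)
  finally show ?thesis .
qed

theorem theorem44:
  fixes n u :: nat
  assumes "even n" and "n \<ge> 4" and "u < n"
  shows "\<not> sedentary n (cycle_adj n) u"
proof (cases "n = 4")
  case True
  then have "transition n (cycle_adj n) (pi / 2) u u = 0"
    using transition_cycle_4[of u "pi / 2"] assms(3) by simp
  then show ?thesis
    by (intro not_sedentary_if_zero[of "pi / 2"]) simp_all
next
  case False
  then have "n \<ge> 6" using assms(1,2) by presburger
  have n: "n \<ge> 3" using assms(2) by simp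
  note diag = mat_pow_cycle_adj_diag[OF n assms(3)]
  show ?thesis
  proof (rule not_sedentary_if_Re_nonpos)
    show "norm (mat_pow n (cycle_adj n) k u u) \<le> 2 ^ k" for k
      by (rule norm_mat_pow_cycle_adj_diag_le[OF n assms(3)])
    show "mat_pow n (cycle_adj n) k u u \<in> \<real>" for k
      unfolding diag by simp
    show "mat_pow n (cycle_adj n) k u u = 0" if "odd k" for k
      unfolding diag using cycle_walks_odd[OF assms(1), of k 0] that by simp
    show "Re (transition n (cycle_adj n) (3 / 2) u u) \<le> 0"
      using Re_transition_cycle_neg[OF \<open>n \<ge> 6\<close> assms(1,3)] by simp
  qed simp
qed

end
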